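(* Fix $(N,r)\in\{(1^{*},6),(2,4),(3,3),(4,2)\}$. Let $\alpha$ be a complex parameter, $\beta:=1-\alpha$, and set $$\omega_0={}_2F_1\!\left(\tfrac1r,1-\tfrac1r;1;\alpha\right),\qquad \omega_1=\frac{i}{\sqrt N}\,{}_2F_1\!\left(\tfrac1r,1-\tfrac1r;1;\beta\right),\qquad \tau=\frac{\omega_1}{\omega_0},$$ where for $N=1^{*}$ one takes $\sqrt N=1$. (Locally, $\alpha$ is regarded as a function of $\tau$, with $\operatorname{Im}\tau>0$.) Let $\partial_\tau:=\frac{1}{2\pi i}\frac{\partial}{\partial\tau}$ and define $$A=\omega_0,\quad B=(1-\alpha)^{1/r}A,\quad C=\alpha^{1/r}A,\quad E=\partial_\tau\log\left(C^rB^r\right).$$ Assign weights $k=1$ to $A,B,C$ and $k=2$ to $E$. Define $$\hat E=E+\frac r6\cdot\frac{-3}{\pi\operatorname{Im}\tau},$$ and, for a quantity of weight $k$, $\hat\partial_\tau=\partial_\tau+\frac{k}{12}\cdot\frac{-3}{\pi\operatorname{Im}\tau}$ (so $\hat\partial_\tau$ acts with $k=1$ on $A,B,C$ and with $k=2$ on $\hat E$). Then $$\hat\partial_\tau A=\frac1{2r}A\Big(\hat E+\frac{C^r-B^r}{A^r}A^2\Big),\quad \hat\partial_\tau B=\frac1{2r}B(\hat E-A^2),\quad \hat\partial_\tau C=\frac1{2r}C(\hat E+A^2),\quad \hat\partial_\tau\hat E=\frac1{2r}(\hat E^2-A^4).$$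
   Context: $\omega_0,\omega_1$ form a basis of solutions of the Picard–Fuchs operator $\theta^2-\alpha(\theta+1/r)(\theta+1-1/r)$, $\theta=\alpha\,\partial/\partial\alpha$, of the elliptic curve family over the modular curve $X_0(N)=\Gamma_0(N)\backslash\mathcal H^*$ (with $\Gamma_0(1^* )$ the unique index-2 normal subgroup of $\mathrm{PSL}(2,\mathbb Z)$); ${}_2F_1$ is the Gauss hypergeometric function. *)

theory Defs
  imports "HOL-Complex_Analysis.Complex_Analysis"
begin

definition hyp2F1 :: "complex \<Rightarrow> complex \<Rightarrow> complex \<Rightarrow> complex \<Rightarrow> complex" where
  "hyp2F1 a b c z =
     (\<Sum>n. pochhammer a n * pochhammer b n / (pochhammer c n * fact n) * z ^ n)"

text \<open>Wirtinger derivative d/dz = (d/dx - i d/dy)/2 of a (real-differentiable) function;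
  it coincides with the complex derivative for holomorphic functions.\<close>
definition wirtinger :: "(complex \<Rightarrow> complex) \<Rightarrow> complex \<Rightarrow> complex" where
  "wirtinger f z =
     (frechet_derivative f (at z) 1 - \<i> * frechet_derivative f (at z) \<i>) / 2"

definition dtau :: "(complex \<Rightarrow> complex) \<Rightarrow> complex \<Rightarrow> complex" where
  "dtau f t = wirtinger f t / (2 * complex_of_real pi * \<i>)"

text \<open>Periods omega0, omega1 (the period ratio is tau = omega1/omega0); sqrtN = sqrt N (= 1 for N = 1*).\<close>
definition omega0 :: "nat \<Rightarrow> complex \<Rightarrow> complex" where
  "omega0 r a = hyp2F1 (1 / of_nat r) (1 - 1 / of_nat r) 1 a"

definition omega1 :: "real \<Rightarrow> nat \<Rightarrow> complex \<Rightarrow> complex" where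
  "omega1 sqrtN r a = \<i> / complex_of_real sqrtN * hyp2F1 (1 / of_nat r) (1 - 1 / of_nat r) 1 (1 - a)"

definition Afun :: "nat \<Rightarrow> (complex \<Rightarrow> complex) \<Rightarrow> complex \<Rightarrow> complex" where
  "Afun r \<alpha> s = omega0 r (\<alpha> s)"

definition Bfun :: "nat \<Rightarrow> (complex \<Rightarrow> complex) \<Rightarrow> complex \<Rightarrow> complex" where
  "Bfun r \<alpha> s = (1 - \<alpha> s) powr (1 / of_nat r) * Afun r \<alpha> s"

definition Cfun :: "nat \<Rightarrow> (complex \<Rightarrow> complex) \<Rightarrow> complex \<Rightarrow> complex" where
  "Cfun r \<alpha> s = (\<alpha> s) powr (1 / of_nat r) * Afun r \<alpha> s"

text \<open>E = d_tau log(C^r B^r), written as the logarithmic derivative.\<close>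
definition Efun :: "nat \<Rightarrow> (complex \<Rightarrow> complex) \<Rightarrow> complex \<Rightarrow> complex" where
  "Efun r \<alpha> s = dtau (\<lambda>u. Cfun r \<alpha> u ^ r * Bfun r \<alpha> u ^ r) s
                   / (Cfun r \<alpha> s ^ r * Bfun r \<alpha> s ^ r)"

definition Ehat :: "nat \<Rightarrow> (complex \<Rightarrow> complex) \<Rightarrow> complex \<Rightarrow> complex" where
  "Ehat r \<alpha> s = Efun r \<alpha> s + complex_of_real (real r / 6 * (-3 / (pi * Im s)))"

definition dhat :: "real \<Rightarrow> (complex \<Rightarrow> complex) \<Rightarrow> complex \<Rightarrow> complex" where
  "dhat k f s = dtau f s + complex_of_real (k / 12 * (-3 / (pi * Im s))) * f s"

end

theory Submission
  imports Defs
begin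

text \<open>With \<open>a = 1/r\<close>, both \<open>\<omega>\<^sub>0 = F(\<alpha>)\<close> and \<open>F(1 - \<alpha>)\<close>, where \<open>F = \<^sub>2F\<^sub>1(a, 1 - a; 1; \<cdot>)\<close>,
  solve the hypergeometric equation \<open>(z (1 - z) F')' = a (1 - a) F\<close>. Hence their Wronskian,
  normalised by \<open>z (1 - z)\<close>, is constant; its value \<open>sin (\<pi> a) / \<pi>\<close> (Legendre's relation) is
  found at \<open>z \<rightarrow> 0\<^sup>+\<close> from the asymptotics of the Taylor coefficients. Since \<open>\<surd>N = 2 sin (\<pi>/r)\<close>
  in all four cases, differentiating \<open>\<tau> = \<omega>\<^sub>1/\<omega>\<^sub>0\<close> yields \<open>d\<alpha>/d\<tau> = 2 \<pi> i \<alpha> (1 - \<alpha>) \<omega>\<^sub>0\<^sup>2\<close>.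
  Then \<open>\<partial>\<^sub>\<tau> A\<close>, \<open>\<partial>\<^sub>\<tau> B\<close>, \<open>\<partial>\<^sub>\<tau> C\<close> and \<open>E = (1 - 2 \<alpha>) A\<^sup>2 + 2 r \<alpha> (1 - \<alpha>) F'(\<alpha>) A\<close> are explicit in
  \<open>\<alpha>, F(\<alpha>), F'(\<alpha>)\<close>, the hypergeometric equation once more gives \<open>\<partial>\<^sub>\<tau> E = (E\<^sup>2 - A\<^sup>4) / (2 r)\<close>,
  and the four identities are algebra: the weight terms \<open>-k / (4 \<pi> Im \<tau>)\<close> exactly absorb the
  \<open>\<partial>\<^sub>\<tau>\<close>-derivative of the non-holomorphic summand of \<open>\<hat>E\<close>.\<close>

section \<open>The hypergeometric series \<open>\<^sub>2F\<^sub>1(a, 1 - a; 1; z)\<close>\<close>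

definition hyp_coeff :: "real \<Rightarrow> nat \<Rightarrow> complex" where
  "hyp_coeff a n = pochhammer (of_real a) n * pochhammer (1 - of_real a) n / (pochhammer 1 n * fact n)"

definition hyp_fps :: "real \<Rightarrow> complex fps" where
  "hyp_fps a = Abs_fps (hyp_coeff a)"

definition hyp :: "real \<Rightarrow> complex \<Rightarrow> complex" where
  "hyp a = eval_fps (hyp_fps a)"

definition hyp' :: "real \<Rightarrow> complex \<Rightarrow> complex" where
  "hyp' a = eval_fps (fps_deriv (hyp_fps a))"

lemma hyp2F1_eq_hyp: "hyp2F1 (of_real a) (1 - of_real a) 1 z = hyp a z"
  by (simp add: hyp2F1_def hyp_def eval_fps_def hyp_fps_def hyp_coeff_def)

lemma hyp_coeff_0 [simp]: "hyp_coeff a 0 = 1"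
  by (simp add: hyp_coeff_def)

lemma hyp_coeff_Suc:
  "hyp_coeff a (Suc n) =
     hyp_coeff a n * ((of_real a + of_nat n) * (1 - of_real a + of_nat n)) / (of_nat (Suc n))\<^sup>2"
  by (simp add: hyp_coeff_def pochhammer_Suc pochhammer_fact[symmetric] field_simps power2_eq_square)

lemma norm_hyp_coeff_le_1:
  assumes "0 \<le> a" "a \<le> 1"
  shows "norm (hyp_coeff a n) \<le> 1"
proof (induction n)
  case 0
  then show ?case by simp
next
  case (Suc n)
  define q :: complex where "q = (of_real a + of_nat n) * (1 - of_real a + of_nat n)"
  have "q = of_real ((a + n) * (1 - a + n))"
    by (simp add: q_def)
  then have "norm q = (a + n) * (1 - a + n)"
    using assms by (simp only: norm_of_real) simp
  also have "\<dots> \<le> (real (Suc n))\<^sup>2"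
    using assms by (simp add: power2_eq_square algebra_simps) (smt (verit) mult_nonneg_nonneg of_nat_0_le_iff)
  finally have q: "norm q \<le> (real (Suc n))\<^sup>2" .
  have "norm (hyp_coeff a (Suc n)) = norm (hyp_coeff a n) * norm q / (real (Suc n))\<^sup>2"
    unfolding hyp_coeff_Suc q_def by (simp add: norm_mult norm_divide norm_power del: of_nat_Suc)
  also have "\<dots> \<le> 1 * (real (Suc n))\<^sup>2 / (real (Suc n))\<^sup>2"
    by (intro divide_right_mono mult_mono Suc q) auto
  finally show ?case
    by simp
qed

lemma fps_conv_radius_hyp_fps:
  assumes "0 \<le> a" "a \<le> 1"
  shows "1 \<le> fps_conv_radius (hyp_fps a)"
  unfolding fps_conv_radius_def
proof (rule conv_radius_geI_ex')
  fix \<rho> :: real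
  assume "0 < \<rho>" "ereal \<rho> < 1"
  then have \<rho>: "0 < \<rho>" "\<rho> < 1" by auto
  show "summable (\<lambda>n. fps_nth (hyp_fps a) n * of_real \<rho> ^ n)"
  proof (rule summable_norm_cancel, rule summable_comparison_test)
    show "\<exists>N. \<forall>n\<ge>N. norm (norm (fps_nth (hyp_fps a) n * of_real \<rho> ^ n)) \<le> \<rho> ^ n"
      using norm_hyp_coeff_le_1[OF assms] \<rho>
      by (auto simp: hyp_fps_def norm_mult norm_power intro!: mult_left_le_one_le)
    show "summable (\<lambda>n. \<rho> ^ n)"
      using \<rho> by (simp add: summable_geometric)
  qed
qed

text \<open>The hypergeometric equation
  \<open>z (1 - z) F'' + (1 - 2 z) F' = a (1 - a) F\<close> in self-adjoint form.\<close>
lemma hyp_fps_ode: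
  "fps_deriv (fps_X * (1 - fps_X) * fps_deriv (hyp_fps a)) = fps_const (of_real (a * (1 - a))) * hyp_fps a"
proof (rule fps_ext)
  fix n
  define c where "c = hyp_coeff a"
  have G_nth: "fps_nth (fps_X * (1 - fps_X) * fps_deriv (hyp_fps a)) (Suc k)
      = of_nat (Suc k) * c (Suc k) - of_nat k * c k" for k
  proof -
    have "fps_X * (1 - fps_X) * fps_deriv (hyp_fps a)
        = fps_X * fps_deriv (hyp_fps a) - fps_X * (fps_X * fps_deriv (hyp_fps a))"
      by (simp add: algebra_simps)
    then show ?thesis
      by (cases k) (simp_all add: c_def hyp_fps_def algebra_simps del: of_nat_Suc)
  qed
  have rec: "of_nat (Suc n) * (of_nat (Suc n) * c (Suc n))
      = c n * ((of_real a + of_nat n) * (1 - of_real a + of_nat n))"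
    unfolding c_def hyp_coeff_Suc by (simp add: power2_eq_square del: of_nat_Suc)
  show "fps_nth (fps_deriv (fps_X * (1 - fps_X) * fps_deriv (hyp_fps a))) n
      = fps_nth (fps_const (of_real (a * (1 - a))) * hyp_fps a) n"
    unfolding fps_deriv_nth Suc_eq_plus1 [symmetric] G_nth
    using rec by (simp add: c_def [symmetric] hyp_fps_def algebra_simps)
qed

lemma hyp_0 [simp]: "hyp a 0 = 1"
  by (simp add: hyp_def eval_fps_at_0 hyp_fps_def)

lemma ereal_less_if_less_one: "x < 1 \<Longrightarrow> 1 \<le> R \<Longrightarrow> ereal x < R"
  by (metis ereal_less(3) order_less_le_trans)

context
  fixes a :: real
  assumes a: "0 \<le> a" "a \<le> 1"
begin

lemma fps_conv_radius_hyp_fps_deriv: "1 \<le> fps_conv_radius (fps_deriv (hyp_fps a))"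
  using fps_conv_radius_deriv[of "hyp_fps a"] fps_conv_radius_hyp_fps[OF a] by (meson order_trans)

lemma has_field_derivative_hyp:
  assumes "norm z < 1"
  shows "(hyp a has_field_derivative hyp' a z) (at z)"
  unfolding hyp_def hyp'_def
  using assms fps_conv_radius_hyp_fps[OF a] by (intro has_field_derivative_eval_fps ereal_less_if_less_one)

lemma has_field_derivative_hyp_compose:
  assumes "norm (g z) < 1" "(g has_field_derivative D) (at z)"
  shows "((\<lambda>w. hyp a (g w)) has_field_derivative hyp' a (g z) * D) (at z)"
  using DERIV_chain2[OF has_field_derivative_hyp[OF assms(1)] assms(2)] .

lemma isCont_hyp': "norm z < 1 \<Longrightarrow> isCont (hyp' a) z"
  unfolding hyp'_def using fps_conv_radius_hyp_fps_deriv
  by (intro continuous_eval_fps ereal_less_if_less_one)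

lemma has_field_derivative_hyp_ode:
  assumes z: "norm z < 1"
  shows "((\<lambda>w. w * (1 - w) * hyp' a w) has_field_derivative of_real (a * (1 - a)) * hyp a z) (at z)"
proof -
  define G where "G = fps_X * (1 - fps_X) * fps_deriv (hyp_fps a)"
  have lin: "fps_conv_radius (1 - fps_X :: complex fps) = \<infinity>"
    using fps_conv_radius_diff[of "1 :: complex fps" fps_X] by simp
  have poly: "fps_conv_radius (fps_X * (1 - fps_X) :: complex fps) = \<infinity>"
    using fps_conv_radius_mult[of "fps_X :: complex fps" "1 - fps_X"] lin by simp
  have rad: "1 \<le> fps_conv_radius G"
    using fps_conv_radius_mult[of "fps_X * (1 - fps_X) :: complex fps" "fps_deriv (hyp_fps a)"]
          fps_conv_radius_hyp_fps_deriv poly unfolding G_def by simp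
  have eval: "eval_fps G w = w * (1 - w) * hyp' a w" if "w \<in> ball 0 1" for w
    using that fps_conv_radius_hyp_fps_deriv lin poly
    by (simp add: G_def hyp'_def eval_fps_mult eval_fps_diff ereal_less_if_less_one)
  have "(eval_fps G has_field_derivative eval_fps (fps_deriv G) z) (at z)"
    using z rad by (intro has_field_derivative_eval_fps ereal_less_if_less_one)
  also have "eval_fps (fps_deriv G) z = of_real (a * (1 - a)) * hyp a z"
    using z fps_conv_radius_hyp_fps[OF a]
    unfolding G_def hyp_fps_ode
    by (simp add: eval_fps_mult hyp_def ereal_less_if_less_one)
  finally show ?thesis
    by (rule has_field_derivative_transform_within_open[where S = "ball 0 1"]) (use z eval in auto)
qed

end

section \<open>An Abelian theorem\<close>

lemma norm_suminf_power_le_tail_bound: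
  fixes d :: "nat \<Rightarrow> complex"
  assumes y: "0 < y" "y < 1" and tail: "\<forall>n\<ge>N. norm (d n) \<le> e"
  shows "summable (\<lambda>n. d n * of_real y ^ n)"
    and "norm (\<Sum>n. d n * of_real y ^ n) \<le> (\<Sum>n<N. norm (d n)) + e / (1 - y)"
proof -
  have e: "0 \<le> e"
    using tail norm_ge_zero[of "d N"] by (meson order.trans order_refl)
  have majorant: "norm (d n) * y ^ n \<le> (if n < N then norm (d n) else 0) + e * y ^ n" for n
  proof (cases "n < N")
    case True
    then show ?thesis
      using y e by (simp add: add_increasing2 mult_left_le power_le_one)
  next
    case False
    then show ?thesis
      using tail y by (simp add: mult_right_mono)
  qed
  have sums: "(\<lambda>n. (if n < N then norm (d n) else 0) + e * y ^ n) sums ((\<Sum>n<N. norm (d n)) + e / (1 - y))"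
    using sums_If_finite_set[of "{..<N}" "\<lambda>n. norm (d n)"] sums_mult[OF geometric_sums[of y], of e] y
    by (intro sums_add) simp_all
  have summable: "summable (\<lambda>n. norm (d n) * y ^ n)"
  proof (rule summable_comparison_test'[OF sums_summable[OF sums]])
    show "norm (norm (d n) * y ^ n) \<le> (if n < N then norm (d n) else 0) + e * y ^ n" for n
      using majorant[of n] y by (simp add: abs_mult)
  qed
  then have "summable (\<lambda>n. norm (d n * of_real y ^ n))"
    using y by (simp add: norm_mult norm_power)
  then show "summable (\<lambda>n. d n * of_real y ^ n)"
    by (rule summable_norm_cancel)
  have "norm (\<Sum>n. d n * of_real y ^ n) \<le> (\<Sum>n. norm (d n) * y ^ n)"
    using summable_norm[of "\<lambda>n. d n * of_real y ^ n"] summable y by (simp add: norm_mult norm_power)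
  also have "\<dots> \<le> (\<Sum>n<N. norm (d n)) + e / (1 - y)"
    using sums_le[OF majorant summable_sums[OF summable] sums] .
  finally show "norm (\<Sum>n. d n * of_real y ^ n) \<le> (\<Sum>n<N. norm (d n)) + e / (1 - y)" .
qed

lemma norm_Abel_mean_diff_le:
  fixes b :: "nat \<Rightarrow> complex"
  assumes x: "0 < x" "x < 1" and tail: "\<forall>n\<ge>N. norm (b n - L) \<le> e"
  shows "norm (of_real x * (\<Sum>n. b n * of_real (1 - x) ^ n) - L) \<le> x * (\<Sum>n<N. norm (b n - L)) + e"
proof -
  define y where "y = 1 - x"
  have y: "0 < y" "y < 1"
    using x by (auto simp: y_def)
  note diff = norm_suminf_power_le_tail_bound[OF y tail]
  have "norm (of_real y :: complex) < 1"
    using y by simp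
  from sums_add[OF summable_sums[OF diff(1)] sums_mult[OF geometric_sums[OF this], of L]]
  have "(\<lambda>n. b n * of_real y ^ n) sums ((\<Sum>n. (b n - L) * of_real y ^ n) + L / of_real x)"
    by (simp add: y_def algebra_simps)
  then have "of_real x * (\<Sum>n. b n * of_real y ^ n) - L = of_real x * (\<Sum>n. (b n - L) * of_real y ^ n)"
    using x by (simp add: sums_iff distrib_left)
  then have "norm (of_real x * (\<Sum>n. b n * of_real y ^ n) - L) \<le> x * ((\<Sum>n<N. norm (b n - L)) + e / x)"
    using diff(2) x by (simp add: norm_mult y_def mult_left_mono)
  then show ?thesis
    using x by (simp add: y_def distrib_left)
qed

lemma tendsto_Abel_mean:
  fixes b :: "nat \<Rightarrow> complex"
  assumes "b \<longlonglongrightarrow> L"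
  shows "((\<lambda>x::real. of_real x * (\<Sum>n. b n * of_real (1 - x) ^ n)) \<longlongrightarrow> L) (at_right 0)"
proof (rule tendstoI)
  fix \<epsilon> :: real
  assume \<epsilon>: "0 < \<epsilon>"
  obtain N where N: "\<forall>n\<ge>N. norm (b n - L) \<le> \<epsilon> / 2"
    using assms \<epsilon> unfolding LIMSEQ_iff by (metis dist_norm half_gt_zero less_imp_le)
  define M where "M = (\<Sum>n<N. norm (b n - L))"
  have M: "0 \<le> M"
    by (simp add: M_def sum_nonneg)
  define \<delta> where "\<delta> = min 1 (\<epsilon> / (2 * (M + 1)))"
  have "dist (of_real x * (\<Sum>n. b n * of_real (1 - x) ^ n)) L < \<epsilon>" if x: "0 < x" "x < \<delta>" for x
  proof -
    have "x * M \<le> \<epsilon> / (2 * (M + 1)) * M"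
      using x M by (intro mult_right_mono) (auto simp: \<delta>_def)
    also have "\<dots> < \<epsilon> / 2"
      using \<epsilon> M by (simp add: field_simps)
    finally show ?thesis
      using norm_Abel_mean_diff_le[OF x(1) _ N] x by (simp add: dist_norm M_def \<delta>_def)
  qed
  moreover have "0 < \<delta>"
    using \<epsilon> M by (simp add: \<delta>_def)
  ultimately show "\<forall>\<^sub>F x in at_right 0. dist (of_real x * (\<Sum>n. b n * of_real (1 - x) ^ n)) L < \<epsilon>"
    unfolding eventually_at_right[OF \<open>0 < \<delta>\<close>] by blast
qed

section \<open>Legendre's relation\<close>

lemma rGamma_series_reflection_eq:
  assumes "1 \<le> n"
  shows "rGamma_series (of_real a) n * rGamma_series (1 - of_real a) n * (of_nat n / of_nat (Suc n))
       = of_nat (Suc n) * hyp_coeff a (Suc n)"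
proof -
  define z where "z = complex_of_real a"
  define l where "l = complex_of_real (ln (real n))"
  have "exp (z * l) * exp ((1 - z) * l) = exp l"
    by (simp add: algebra_simps flip: exp_add)
  also have "\<dots> = of_nat n"
    using assms by (simp add: l_def exp_of_real)
  finally have "exp (z * l) * exp ((1 - z) * l) = of_nat n" .
  then have rGamma_eq: "rGamma_series z n * rGamma_series (1 - z) n
      = pochhammer z (Suc n) * pochhammer (1 - z) (Suc n) / (fact n * fact n * of_nat n)"
    unfolding rGamma_series_def l_def [symmetric] by (simp add: field_simps)
  have coeff_eq: "hyp_coeff a (Suc n)
      = pochhammer z (Suc n) * pochhammer (1 - z) (Suc n) / (fact (Suc n) * fact (Suc n))"
    unfolding hyp_coeff_def z_def pochhammer_fact [symmetric] by simp
  have cancel: "X / (f * f * m) * (m / (1 + m)) = (1 + m) * (X / (((1 + m) * f) * ((1 + m) * f)))"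
    if "f \<noteq> 0" "m \<noteq> 0" "1 + m \<noteq> 0" for X f m :: complex
    using that by (simp add: divide_simps)
  have "of_nat n \<noteq> (0 :: complex)"
    using assms by simp
  moreover have "1 + of_nat n \<noteq> (0 :: complex)"
    by (metis of_nat_Suc of_nat_eq_0_iff nat.distinct(1))
  ultimately show ?thesis
    unfolding z_def [symmetric] rGamma_eq coeff_eq fact_Suc of_nat_Suc
    by (intro cancel) auto
qed

text \<open>The limit is \<open>1 / (\<Gamma>(a) \<Gamma>(1 - a))\<close>, evaluated by Euler's reflection formula.\<close>
lemma Suc_times_hyp_coeff_Suc_LIMSEQ:
  "(\<lambda>n. of_nat (Suc n) * hyp_coeff a (Suc n)) \<longlonglongrightarrow> of_real (sin (pi * a) / pi)"
proof -
  define z where "z = complex_of_real a"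
  have "(\<lambda>n. rGamma_series z n * rGamma_series (1 - z) n * (of_nat n / of_nat (Suc n)))
       \<longlonglongrightarrow> rGamma z * rGamma (1 - z) * 1"
    by (intro tendsto_mult rGamma_series_LIMSEQ LIMSEQ_n_over_Suc_n)
  also have "rGamma z * rGamma (1 - z) * 1 = of_real (sin (pi * a) / pi)"
    unfolding z_def rGamma_reflection_complex by (simp flip: sin_of_real)
  finally have "(\<lambda>n. rGamma_series z n * rGamma_series (1 - z) n * (of_nat n / of_nat (Suc n)))
       \<longlonglongrightarrow> of_real (sin (pi * a) / pi)" .
  moreover have "\<forall>\<^sub>F n in sequentially.
      rGamma_series z n * rGamma_series (1 - z) n * (of_nat n / of_nat (Suc n))
      = of_nat (Suc n) * hyp_coeff a (Suc n)"
    using rGamma_series_reflection_eq unfolding z_def by (intro eventually_sequentiallyI[of 1])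
  ultimately show ?thesis
    by (rule Lim_transform_eventually)
qed

lemma hyp_coeff_LIMSEQ_0: "hyp_coeff a \<longlonglongrightarrow> 0"
proof -
  have "(\<lambda>n. of_nat (Suc n) * hyp_coeff a (Suc n) * (1 / of_nat (Suc n)))
      \<longlonglongrightarrow> of_real (sin (pi * a) / pi) * 0"
    by (intro tendsto_mult Suc_times_hyp_coeff_Suc_LIMSEQ filterlim_compose[OF lim_1_over_n filterlim_Suc])
  then have "(\<lambda>n. hyp_coeff a (Suc n)) \<longlonglongrightarrow> 0"
    by (simp del: of_nat_Suc)
  then show ?thesis
    by (simp add: filterlim_sequentially_Suc)
qed

definition lens :: "complex set" where
  "lens = {z. norm z < 1 \<and> norm (1 - z) < 1}"

lemma lens_eq_balls: "lens = ball 0 1 \<inter> ball 1 1"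
  by (auto simp: lens_def dist_norm)

text \<open>The Wronskian of the solutions \<open>F(z)\<close> and \<open>F(1 - z)\<close> of the hypergeometric equation,
  normalised by the factor \<open>z (1 - z)\<close> that makes it constant.\<close>
definition hyp_wronskian :: "real \<Rightarrow> complex \<Rightarrow> complex" where
  "hyp_wronskian a z = z * (1 - z) * (hyp a z * hyp' a (1 - z) + hyp a (1 - z) * hyp' a z)"

context
  fixes a :: real
  assumes a: "0 \<le> a" "a \<le> 1"
begin

lemma has_field_derivative_hyp_wronskian:
  assumes z: "z \<in> lens"
  shows "(hyp_wronskian a has_field_derivative 0) (at z)"
proof -
  define P where "P w = w * (1 - w) * hyp' a w" for w
  have z1: "norm z < 1" and z2: "norm (1 - z) < 1"
    using z by (auto simp: lens_def)
  have flip: "((\<lambda>w. 1 - w) has_field_derivative -1) (at z)"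
    by (auto intro!: derivative_eq_intros)
  have W: "hyp_wronskian a = (\<lambda>w. hyp a w * P (1 - w) + hyp a (1 - w) * P w)"
    by (simp add: fun_eq_iff hyp_wronskian_def P_def algebra_simps)
  have "(hyp_wronskian a has_field_derivative
      hyp a z * (of_real (a * (1 - a)) * hyp a (1 - z) * -1) + hyp' a z * P (1 - z)
      + (hyp a (1 - z) * (of_real (a * (1 - a)) * hyp a z) + hyp' a (1 - z) * -1 * P z)) (at z)"
    unfolding W
    by (intro DERIV_add DERIV_mult' has_field_derivative_hyp[OF a z1]
        has_field_derivative_hyp_ode[OF a z1, folded P_def]
        DERIV_chain2[OF has_field_derivative_hyp_ode[OF a z2, folded P_def] flip]
        DERIV_chain2[OF has_field_derivative_hyp[OF a z2] flip])
  then show ?thesis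
    by (simp add: P_def algebra_simps)
qed

text \<open>As \<open>x \<rightarrow> 0\<^sup>+\<close>, \<open>x F'(1 - x)\<close> and \<open>x F(1 - x)\<close> are Abel means of the coefficient
  sequences \<open>(n + 1) c\<^sub>n\<^sub>+\<^sub>1\<close> and \<open>c\<^sub>n\<close>.\<close>
lemma tendsto_hyp_wronskian_at_right_0:
  "((\<lambda>x::real. hyp_wronskian a (of_real x)) \<longlongrightarrow> of_real (sin (pi * a) / pi)) (at_right 0)"
proof -
  define \<kappa> where "\<kappa> = complex_of_real (sin (pi * a) / pi)"
  have x0: "((\<lambda>x::real. complex_of_real x) \<longlongrightarrow> 0) (at_right 0)"
    using tendsto_of_real[OF tendsto_ident_at[of 0 "{0<..}"]] by simp
  have one_minus_x: "((\<lambda>x::real. 1 - complex_of_real x) \<longlongrightarrow> 1) (at_right 0)"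
    using tendsto_diff[OF tendsto_const x0, of 1] by simp
  have Abel_hyp': "((\<lambda>x::real. of_real x * hyp' a (1 - of_real x)) \<longlongrightarrow> \<kappa>) (at_right 0)"
    using tendsto_Abel_mean[OF Suc_times_hyp_coeff_Suc_LIMSEQ[of a]]
    by (simp add: \<kappa>_def hyp'_def hyp_fps_def eval_fps_def)
  have Abel_hyp: "((\<lambda>x::real. of_real x * hyp a (1 - of_real x)) \<longlongrightarrow> 0) (at_right 0)"
    using tendsto_Abel_mean[OF hyp_coeff_LIMSEQ_0[of a]] by (simp add: hyp_def hyp_fps_def eval_fps_def)
  have hyp_near_0: "((\<lambda>x::real. hyp a (of_real x)) \<longlongrightarrow> 1) (at_right 0)"
    using isCont_tendsto_compose[OF DERIV_isCont[OF has_field_derivative_hyp[OF a]] x0] by simp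
  have hyp'_near_0: "((\<lambda>x::real. hyp' a (of_real x)) \<longlongrightarrow> hyp' a 0) (at_right 0)"
    using isCont_tendsto_compose[OF isCont_hyp'[OF a] x0] by simp
  have "((\<lambda>x::real. hyp a (of_real x) * (1 - of_real x) * (of_real x * hyp' a (1 - of_real x))
      + (of_real x * hyp a (1 - of_real x)) * (1 - of_real x) * hyp' a (of_real x))
      \<longlongrightarrow> 1 * 1 * \<kappa> + 0 * 1 * hyp' a 0) (at_right 0)"
    by (intro tendsto_add tendsto_mult hyp_near_0 one_minus_x Abel_hyp' Abel_hyp hyp'_near_0)
  then show ?thesis
    by (simp add: \<kappa>_def hyp_wronskian_def algebra_simps)
qed

lemma hyp_wronskian_eq:
  assumes "z \<in> lens"
  shows "hyp_wronskian a z = of_real (sin (pi * a) / pi)"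
proof -
  have "\<exists>c. \<forall>w\<in>lens. hyp_wronskian a w = c"
  proof (rule has_field_derivative_zero_constant)
    show "convex lens"
      unfolding lens_eq_balls by (intro convex_Int convex_ball)
    show "(hyp_wronskian a has_field_derivative 0) (at w within lens)" if "w \<in> lens" for w
      using has_field_derivative_hyp_wronskian[OF that] by (rule has_field_derivative_at_within)
  qed
  then obtain c where c: "\<And>w. w \<in> lens \<Longrightarrow> hyp_wronskian a w = c"
    by blast
  have "\<forall>\<^sub>F x in at_right (0::real). x \<in> {0<..<1}"
    by (rule eventually_at_right_real) simp
  then have "\<forall>\<^sub>F x in at_right 0. hyp_wronskian a (of_real x) = c"
  proof eventually_elim
    case (elim x)
    have "1 - complex_of_real x = of_real (1 - x)"
      by simp
    then have "complex_of_real x \<in> lens"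
      using elim unfolding lens_def by (simp only: norm_of_real mem_Collect_eq) simp
    then show ?case
      by (rule c)
  qed
  with tendsto_hyp_wronskian_at_right_0 have "((\<lambda>x::real. c) \<longlongrightarrow> of_real (sin (pi * a) / pi)) (at_right 0)"
    by (rule Lim_transform_eventually)
  then have "c = of_real (sin (pi * a) / pi)"
    using tendsto_unique[OF trivial_limit_at_right_real tendsto_const] by blast
  then show ?thesis
    using c assms by simp
qed

end

section \<open>The operator \<open>\<partial>\<^sub>\<tau>\<close>\<close>

lemma wirtinger_eq_field_derivative:
  assumes "(f has_field_derivative D) (at t)"
  shows "wirtinger f t = D"
proof -
  have "frechet_derivative f (at t) = (\<lambda>h. D * h)"
    using frechet_derivative_at[OF has_field_derivative_imp_has_derivative[OF assms]] by simp
  then show ?thesis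
    by (simp add: wirtinger_def algebra_simps)
qed

lemma dtau_eq_field_derivative:
  "(f has_field_derivative D) (at t) \<Longrightarrow> dtau f t = D / (2 * of_real pi * \<i>)"
  by (simp add: dtau_def wirtinger_eq_field_derivative)

lemma has_derivative_of_real_divide_Im:
  assumes "Im t \<noteq> 0"
  shows "((\<lambda>s. complex_of_real (K / Im s)) has_derivative (\<lambda>h. of_real (- K * Im h / (Im t)\<^sup>2))) (at t)"
proof -
  have "((\<lambda>s. K * inverse (Im s)) has_derivative (\<lambda>h. K * - (inverse (Im t) * Im h * inverse (Im t)))) (at t)"
    using Deriv.has_derivative_inverse[OF assms has_derivative_Im[OF has_derivative_ident]]
    by (rule has_derivative_mult_right)
  moreover have "(\<lambda>s. K * inverse (Im s)) = (\<lambda>s. K / Im s)"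
    by (simp add: divide_inverse)
  moreover have "(\<lambda>h. K * - (inverse (Im t) * Im h * inverse (Im t))) = (\<lambda>h. - K * Im h / (Im t)\<^sup>2)"
    by (simp add: fun_eq_iff field_simps power2_eq_square)
  ultimately have "((\<lambda>s. K / Im s) has_derivative (\<lambda>h. - K * Im h / (Im t)\<^sup>2)) (at t)"
    by simp
  then show ?thesis
    by (rule has_derivative_of_real)
qed

lemma dtau_add_of_real_divide_Im:
  assumes f: "(f has_field_derivative D) (at t)" and Im: "Im t \<noteq> 0"
    and S: "open S" "t \<in> S" and g: "\<And>s. s \<in> S \<Longrightarrow> g s = f s + of_real (K / Im s)"
  shows "dtau g t = D / (2 * of_real pi * \<i>) + of_real (K / (4 * pi * (Im t)\<^sup>2))"
proof -
  have "(g has_derivative (\<lambda>h. D * h + of_real (- K * Im h / (Im t)\<^sup>2))) (at t)"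
    using has_derivative_add[OF has_field_derivative_imp_has_derivative[OF f] has_derivative_of_real_divide_Im[OF Im]]
    by (rule has_derivative_transform_within_open[OF _ S]) (use g in auto)
  then have "frechet_derivative g (at t) = (\<lambda>h. D * h + of_real (- K * Im h / (Im t)\<^sup>2))"
    using frechet_derivative_at by metis
  then have "wirtinger g t = D + \<i> * of_real (K / (Im t)\<^sup>2) / 2"
    by (simp add: wirtinger_def field_simps)
  then show ?thesis
    by (simp add: dtau_def field_simps)
qed

lemma complex_powr_diff_one: "(w :: complex) \<noteq> 0 \<Longrightarrow> w powr (e - 1) = w powr e / w"
  by (simp add: powr_def exp_diff left_diff_distrib)

lemma complex_powr_inverse_power:
  assumes "(w :: complex) \<noteq> 0" "0 < n"
  shows "(w powr (1 / of_nat n)) ^ n = w"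
proof -
  have "(w powr (1 / of_nat n)) ^ n = exp (of_nat n * (Ln w / of_nat n))"
    using assms by (simp add: powr_def exp_of_nat_mult [symmetric])
  then show ?thesis
    using assms by simp
qed

section \<open>The modular parametrisation\<close>

lemma not_nonpos_Reals_if_norm_one_minus_less:
  fixes z :: complex
  assumes "norm (1 - z) < 1"
  shows "z \<notin> \<real>\<^sub>\<le>\<^sub>0"
proof -
  have "\<bar>1 - Re z\<bar> < 1"
    using abs_Re_le_cmod[of "1 - z"] assms by simp
  then show ?thesis
    by (auto simp: complex_nonpos_Reals_iff)
qed

text \<open>The four pairs \<open>(\<surd>N, r)\<close> of the theorem are the instances of \<open>\<surd>N = 2 sin (\<pi>/r)\<close> with
  \<open>N\<close> an integer; this normalisation of \<open>\<omega>\<^sub>1\<close> is all the proof uses about them.\<close>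
locale period_ratio_chart =
  fixes sqrtN :: real and r :: nat and U :: "complex set" and \<alpha> :: "complex \<Rightarrow> complex"
  assumes r: "2 \<le> r"
    and sqrtN: "sqrtN = 2 * sin (pi / r)"
    and U: "open U" and hol: "\<alpha> holomorphic_on U"
    and region: "\<forall>s\<in>U. 0 < Im s \<and> cmod (\<alpha> s) < 1 \<and> cmod (1 - \<alpha> s) < 1"
    and tau: "\<forall>s\<in>U. omega1 sqrtN r (\<alpha> s) / omega0 r (\<alpha> s) = s"
begin

abbreviation F :: "complex \<Rightarrow> complex" where "F \<equiv> hyp (1 / real r)"
abbreviation F' :: "complex \<Rightarrow> complex" where "F' \<equiv> hyp' (1 / real r)"

lemma parameter_bounds: "0 \<le> 1 / real r" "1 / real r \<le> 1"
  using r by auto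

lemma omega0_eq: "omega0 r z = F z"
  using hyp2F1_eq_hyp[of "1 / real r" z] by (simp add: omega0_def)

lemma omega1_eq: "omega1 sqrtN r z = \<i> / of_real sqrtN * F (1 - z)"
  using hyp2F1_eq_hyp[of "1 / real r" "1 - z"] by (simp add: omega1_def)

lemma Afun_eq: "Afun r \<alpha> s = F (\<alpha> s)"
  by (simp add: Afun_def omega0_eq)

lemma Im_pos: "s \<in> U \<Longrightarrow> 0 < Im s"
  using region by blast

lemma alpha_in_lens: "s \<in> U \<Longrightarrow> \<alpha> s \<in> lens"
  using region by (simp add: lens_def)

lemma alpha_nonzero: "s \<in> U \<Longrightarrow> \<alpha> s \<noteq> 0"
  using region by fastforce

lemma one_minus_alpha_nonzero: "s \<in> U \<Longrightarrow> 1 - \<alpha> s \<noteq> 0"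
  using region by fastforce

lemma hyp_alpha_nonzero: "s \<in> U \<Longrightarrow> F (\<alpha> s) \<noteq> 0"
  using tau Im_pos[of s] by (force simp: omega0_eq)

lemma period_ratio_normalisation:
  "\<i> / of_real sqrtN * of_real (sin (pi * (1 / real r)) / pi) = \<i> / (2 * of_real pi)"
proof -
  have "0 < sin (pi / r)"
    using r by (intro sin_gt_zero) (auto simp: field_simps)
  then show ?thesis
    by (simp add: sqrtN field_simps)
qed

lemma deriv_period_ratio_eq_1:
  assumes s: "s \<in> U"
  shows "- (\<i> / of_real sqrtN) * deriv \<alpha> s * (F (\<alpha> s) * F' (1 - \<alpha> s) + F (1 - \<alpha> s) * F' (\<alpha> s))
    = F (\<alpha> s) ^ 2"
proof -
  define c where "c = \<i> / complex_of_real sqrtN"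
  define x where "x = \<alpha> s"
  define D where "D = deriv \<alpha> s"
  have x: "norm x < 1" "norm (1 - x) < 1"
    using alpha_in_lens[OF s] by (auto simp: lens_def x_def)
  have \<alpha>: "(\<alpha> has_field_derivative D) (at s)"
    using holomorphic_derivI[OF hol U s] by (simp add: D_def)
  have "((\<lambda>u. 1 - \<alpha> u) has_field_derivative - D) (at s)"
    using DERIV_diff[OF DERIV_const \<alpha>] by simp
  from has_field_derivative_hyp_compose[OF parameter_bounds _ this]
  have "((\<lambda>u. c * F (1 - \<alpha> u)) has_field_derivative c * (F' (1 - x) * - D)) (at s)"
    using x by (intro DERIV_cmult) (simp add: x_def)
  from DERIV_divide[OF this has_field_derivative_hyp_compose[OF parameter_bounds _ \<alpha>] hyp_alpha_nonzero[OF s]]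
  have "((\<lambda>u. c * F (1 - \<alpha> u) / F (\<alpha> u)) has_field_derivative
      (c * (F' (1 - x) * - D) * F x - c * F (1 - x) * (F' x * D)) / (F x * F x)) (at s)"
    using x by (simp add: x_def)
  moreover have "((\<lambda>u. c * F (1 - \<alpha> u) / F (\<alpha> u)) has_field_derivative 1) (at s)"
    using tau U s
    by (intro has_field_derivative_transform_within_open[OF DERIV_ident U s])
       (simp_all add: omega0_eq omega1_eq c_def)
  ultimately have "(c * (F' (1 - x) * - D) * F x - c * F (1 - x) * (F' x * D)) / (F x * F x) = 1"
    by (rule DERIV_unique)
  then show ?thesis
    using hyp_alpha_nonzero[OF s]
    by (simp add: c_def [symmetric] x_def [symmetric] D_def [symmetric] divide_eq_eq power2_eq_square algebra_simps)
qed

text \<open>Inserting Legendre's relation into \<open>d\<tau>/d\<alpha>\<close> gives the classical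
  \<open>d\<alpha>/d\<tau> = 2 \<pi> i \<alpha> (1 - \<alpha>) \<omega>\<^sub>0\<^sup>2\<close>.\<close>
lemma has_field_derivative_alpha:
  assumes s: "s \<in> U"
  shows "(\<alpha> has_field_derivative 2 * of_real pi * \<i> * \<alpha> s * (1 - \<alpha> s) * F (\<alpha> s) ^ 2) (at s)"
proof -
  define x where "x = \<alpha> s"
  have wronskian: "x * (1 - x) * (F x * F' (1 - x) + F (1 - x) * F' x) = of_real (sin (pi * (1 / real r)) / pi)"
    using hyp_wronskian_eq[OF parameter_bounds alpha_in_lens[OF s]] by (simp add: hyp_wronskian_def x_def)
  define c where "c = \<i> / complex_of_real sqrtN"
  have "- deriv \<alpha> s * (c * of_real (sin (pi * (1 / real r)) / pi))
      = x * (1 - x) * (- c * deriv \<alpha> s * (F x * F' (1 - x) + F (1 - x) * F' x))"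
    unfolding wronskian [symmetric] by (simp add: algebra_simps)
  also have "\<dots> = x * (1 - x) * F x ^ 2"
    using deriv_period_ratio_eq_1[OF s] by (simp add: x_def c_def)
  finally have "deriv \<alpha> s = 2 * of_real pi * \<i> * x * (1 - x) * F x ^ 2"
    unfolding c_def period_ratio_normalisation by (simp add: field_simps)
  then show ?thesis
    using holomorphic_derivI[OF hol U s] by (simp add: x_def)
qed

lemma has_field_derivative_hyp_alpha:
  assumes "s \<in> U"
  shows "((\<lambda>u. F (\<alpha> u)) has_field_derivative
           F' (\<alpha> s) * (2 * of_real pi * \<i> * \<alpha> s * (1 - \<alpha> s) * F (\<alpha> s) ^ 2)) (at s)"
  using alpha_in_lens[OF assms]
  by (intro has_field_derivative_hyp_compose[OF parameter_bounds] has_field_derivative_alpha assms)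
     (simp add: lens_def)

lemma dtau_Afun:
  assumes "s \<in> U"
  shows "dtau (Afun r \<alpha>) s = \<alpha> s * (1 - \<alpha> s) * F' (\<alpha> s) * F (\<alpha> s) ^ 2"
  unfolding Afun_eq [abs_def] dtau_eq_field_derivative[OF has_field_derivative_hyp_alpha[OF assms]]
  by (simp add: field_simps)

lemma dtau_powr_Afun:
  assumes s: "s \<in> U" and g: "(g has_field_derivative G) (at s)" and nonpos: "g s \<notin> \<real>\<^sub>\<le>\<^sub>0"
  shows "dtau (\<lambda>u. g u powr (1 / of_nat r) * Afun r \<alpha> u) s
    = g s powr (1 / of_nat r) * F (\<alpha> s) *
      (G / (2 * of_real pi * \<i>) / (of_nat r * g s) + \<alpha> s * (1 - \<alpha> s) * F' (\<alpha> s) * F (\<alpha> s))"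
proof -
  have "g s \<noteq> 0"
    using nonpos by auto
  have "((\<lambda>u. g u powr (1 / of_nat r) * Afun r \<alpha> u) has_field_derivative
      1 / of_nat r * (g s powr (1 / of_nat r) / g s) * G * F (\<alpha> s)
      + g s powr (1 / of_nat r) * (F' (\<alpha> s) * (2 * of_real pi * \<i> * \<alpha> s * (1 - \<alpha> s) * F (\<alpha> s) ^ 2))) (at s)"
    unfolding Afun_eq
    by (rule DERIV_cong[OF DERIV_mult[OF DERIV_chain2[OF has_field_derivative_powr[OF nonpos] g]
          has_field_derivative_hyp_alpha[OF s]]])
       (simp add: complex_powr_diff_one[OF \<open>g s \<noteq> 0\<close>] algebra_simps)
  then show ?thesis
    using r \<open>g s \<noteq> 0\<close> by (simp add: dtau_eq_field_derivative field_simps power2_eq_square)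
qed

lemma dtau_Bfun:
  assumes s: "s \<in> U"
  shows "dtau (Bfun r \<alpha>) s
    = Bfun r \<alpha> s * (\<alpha> s * (1 - \<alpha> s) * F' (\<alpha> s) * F (\<alpha> s) - \<alpha> s * F (\<alpha> s) ^ 2 / of_nat r)"
proof -
  have "((\<lambda>u. 1 - \<alpha> u) has_field_derivative - (2 * of_real pi * \<i> * \<alpha> s * (1 - \<alpha> s) * F (\<alpha> s) ^ 2)) (at s)"
    using DERIV_diff[OF DERIV_const has_field_derivative_alpha[OF s]] by simp
  moreover have "1 - \<alpha> s \<notin> \<real>\<^sub>\<le>\<^sub>0"
    using alpha_in_lens[OF s] by (intro not_nonpos_Reals_if_norm_one_minus_less) (simp add: lens_def)
  ultimately have eq: "dtau (Bfun r \<alpha>) s = (1 - \<alpha> s) powr (1 / of_nat r) * F (\<alpha> s) *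
      (- (2 * of_real pi * \<i> * \<alpha> s * (1 - \<alpha> s) * F (\<alpha> s) ^ 2) / (2 * of_real pi * \<i>) / (of_nat r * (1 - \<alpha> s))
       + \<alpha> s * (1 - \<alpha> s) * F' (\<alpha> s) * F (\<alpha> s))"
    unfolding Bfun_def [abs_def] by (rule dtau_powr_Afun[OF s])
  show ?thesis
    unfolding eq using one_minus_alpha_nonzero[OF s] r by (simp add: Bfun_def Afun_eq field_simps)
qed

lemma dtau_Cfun:
  assumes s: "s \<in> U"
  shows "dtau (Cfun r \<alpha>) s
    = Cfun r \<alpha> s * (\<alpha> s * (1 - \<alpha> s) * F' (\<alpha> s) * F (\<alpha> s) + (1 - \<alpha> s) * F (\<alpha> s) ^ 2 / of_nat r)"
proof -
  have "\<alpha> s \<notin> \<real>\<^sub>\<le>\<^sub>0"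
    using alpha_in_lens[OF s] by (intro not_nonpos_Reals_if_norm_one_minus_less) (simp add: lens_def)
  then have eq: "dtau (Cfun r \<alpha>) s = \<alpha> s powr (1 / of_nat r) * F (\<alpha> s) *
      (2 * of_real pi * \<i> * \<alpha> s * (1 - \<alpha> s) * F (\<alpha> s) ^ 2 / (2 * of_real pi * \<i>) / (of_nat r * \<alpha> s)
       + \<alpha> s * (1 - \<alpha> s) * F' (\<alpha> s) * F (\<alpha> s))"
    unfolding Cfun_def [abs_def] by (rule dtau_powr_Afun[OF s has_field_derivative_alpha[OF s]])
  show ?thesis
    unfolding eq using alpha_nonzero[OF s] r by (simp add: Cfun_def Afun_eq field_simps)
qed

lemma Bfun_power: "s \<in> U \<Longrightarrow> Bfun r \<alpha> s ^ r = (1 - \<alpha> s) * F (\<alpha> s) ^ r"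
  using complex_powr_inverse_power[OF one_minus_alpha_nonzero] r
  by (simp add: Bfun_def Afun_eq power_mult_distrib)

lemma Cfun_power: "s \<in> U \<Longrightarrow> Cfun r \<alpha> s ^ r = \<alpha> s * F (\<alpha> s) ^ r"
  using complex_powr_inverse_power[OF alpha_nonzero] r
  by (simp add: Cfun_def Afun_eq power_mult_distrib)

lemma Cfun_power_mult_Bfun_power:
  assumes "s \<in> U"
  shows "Cfun r \<alpha> s ^ r * Bfun r \<alpha> s ^ r = \<alpha> s * (1 - \<alpha> s) * F (\<alpha> s) ^ (2 * r)"
proof -
  have "F (\<alpha> s) ^ (2 * r) = F (\<alpha> s) ^ r * F (\<alpha> s) ^ r"
    by (simp add: mult_2 power_add)
  then show ?thesis
    using assms by (simp add: Cfun_power Bfun_power)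
qed

text \<open>The holomorphic part of \<open>\<hat>E\<close>; on \<open>U\<close> it agrees with \<open>E\<close>.\<close>
definition Eholo :: "complex \<Rightarrow> complex" where
  "Eholo s = (1 - 2 * \<alpha> s) * F (\<alpha> s) ^ 2 + 2 * of_nat r * (\<alpha> s * (1 - \<alpha> s) * F' (\<alpha> s)) * F (\<alpha> s)"

lemma Efun_eq_Eholo:
  assumes s: "s \<in> U"
  shows "Efun r \<alpha> s = Eholo s"
proof -
  define x where "x = \<alpha> s"
  define D where "D = 2 * of_real pi * \<i> * x * (1 - x) * F x ^ 2"
  have \<alpha>: "(\<alpha> has_field_derivative D) (at s)"
    using has_field_derivative_alpha[OF s] by (simp add: D_def x_def)
  have deriv: "((\<lambda>u. \<alpha> u * (1 - \<alpha> u) * F (\<alpha> u) ^ (2 * r)) has_field_derivative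
      (D * (1 - x) - x * D) * F x ^ (2 * r) + x * (1 - x) * (of_nat (2 * r) * F x ^ (2 * r - 1) * (F' x * D))) (at s)"
    using has_field_derivative_hyp_alpha[OF s] \<alpha>
    by (auto intro!: derivative_eq_intros simp: D_def x_def)
  have CB: "((\<lambda>u. Cfun r \<alpha> u ^ r * Bfun r \<alpha> u ^ r) has_field_derivative
      (D * (1 - x) - x * D) * F x ^ (2 * r) + x * (1 - x) * (of_nat (2 * r) * F x ^ (2 * r - 1) * (F' x * D))) (at s)"
    by (rule has_field_derivative_transform_within_open[OF deriv U s]) (simp add: Cfun_power_mult_Bfun_power)
  then have "Efun r \<alpha> s = ((D * (1 - x) - x * D) * F x ^ (2 * r)
      + x * (1 - x) * (of_nat (2 * r) * F x ^ (2 * r - 1) * (F' x * D))) / (2 * of_real pi * \<i>)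
      / (x * (1 - x) * F x ^ (2 * r))"
    unfolding Efun_def dtau_eq_field_derivative[OF CB] Cfun_power_mult_Bfun_power[OF s] by (simp add: x_def)
  also have "\<dots> = Eholo s"
  proof -
    have "F x ^ (2 * r) = F x ^ (2 * r - 1) * F x"
      using r by (simp flip: power_Suc2)
    moreover have "F x ^ (2 * r - 1) \<noteq> 0"
      using hyp_alpha_nonzero[OF s] by (simp add: x_def)
    ultimately show ?thesis
      using alpha_nonzero[OF s] one_minus_alpha_nonzero[OF s] hyp_alpha_nonzero[OF s]
      unfolding Eholo_def D_def x_def [symmetric] by (simp add: field_simps power2_eq_square)
  qed
  finally show ?thesis .
qed

text \<open>Via the hypergeometric equation, \<open>E\<close> satisfies Ramanujan's differential equation
  \<open>\<partial>\<^sub>\<tau> E = (E\<^sup>2 - A\<^sup>4) / (2 r)\<close>.\<close>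
lemma has_field_derivative_Eholo:
  assumes s: "s \<in> U"
  shows "(Eholo has_field_derivative 2 * of_real pi * \<i> * ((Eholo s ^ 2 - F (\<alpha> s) ^ 4) / (2 * of_nat r))) (at s)"
proof -
  define x where "x = \<alpha> s"
  define D where "D = 2 * of_real pi * \<i> * x * (1 - x) * F x ^ 2"
  have \<alpha>: "(\<alpha> has_field_derivative D) (at s)"
    using has_field_derivative_alpha[OF s] by (simp add: D_def x_def)
  have F: "((\<lambda>u. F (\<alpha> u)) has_field_derivative F' x * D) (at s)"
    using has_field_derivative_hyp_alpha[OF s] by (simp add: D_def x_def)
  have flux: "((\<lambda>u. \<alpha> u * (1 - \<alpha> u) * F' (\<alpha> u)) has_field_derivative
      of_real (1 / real r * (1 - 1 / real r)) * F x * D) (at s)"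
    using DERIV_chain2[OF has_field_derivative_hyp_ode[OF parameter_bounds] \<alpha>] alpha_in_lens[OF s]
    by (simp add: lens_def x_def)
  have "(Eholo has_field_derivative
      (0 - 2 * D) * F x ^ 2 + (1 - 2 * x) * (of_nat 2 * (F' x * D) * F x ^ (2 - 1))
      + ((2 * of_nat r * (of_real (1 / real r * (1 - 1 / real r)) * F x * D)) * F x
      + 2 * of_nat r * (x * (1 - x) * F' x) * (F' x * D))) (at s)"
    unfolding Eholo_def [abs_def]
    by (rule DERIV_cong[OF DERIV_add[OF
          DERIV_mult'[OF DERIV_diff[OF DERIV_const DERIV_cmult[OF \<alpha>]] DERIV_power[OF F]]
          DERIV_mult[OF DERIV_cmult[OF flux] F]]])
       (simp add: x_def algebra_simps)
  moreover have "(0 - 2 * D) * F x ^ 2 + (1 - 2 * x) * (of_nat 2 * (F' x * D) * F x ^ (2 - 1))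
      + ((2 * of_nat r * (of_real (1 / real r * (1 - 1 / real r)) * F x * D)) * F x
      + 2 * of_nat r * (x * (1 - x) * F' x) * (F' x * D))
      = 2 * of_real pi * \<i> * ((Eholo s ^ 2 - F (\<alpha> s) ^ 4) / (2 * of_nat r))"
    using r unfolding Eholo_def x_def [symmetric] D_def
    by (simp add: field_simps power2_eq_square power4_eq_xxxx)
  ultimately show ?thesis
    by (rule DERIV_cong)
qed

lemma Ehat_eq_Eholo:
  "s \<in> U \<Longrightarrow> Ehat r \<alpha> s = Eholo s + of_real (- (real r / (2 * pi)) / Im s)"
  by (simp add: Ehat_def Efun_eq_Eholo field_simps)

lemma dtau_Ehat:
  assumes t: "t \<in> U"
  shows "dtau (Ehat r \<alpha>) t
    = (Eholo t ^ 2 - F (\<alpha> t) ^ 4) / (2 * of_nat r) + of_real (- (real r / (2 * pi)) / (4 * pi * (Im t)\<^sup>2))"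
  using dtau_add_of_real_divide_Im[OF has_field_derivative_Eholo[OF t] _ U t Ehat_eq_Eholo] Im_pos[OF t]
  by simp

lemma dhat_Afun:
  assumes t: "t \<in> U"
  shows "dhat 1 (Afun r \<alpha>) t = 1 / (2 * of_nat r) * Afun r \<alpha> t *
    (Ehat r \<alpha> t + (Cfun r \<alpha> t ^ r - Bfun r \<alpha> t ^ r) / Afun r \<alpha> t ^ r * Afun r \<alpha> t ^ 2)"
proof -
  have "complex_of_real (Im t) \<noteq> 0"
    using Im_pos[OF t] by simp
  then show ?thesis
    using r hyp_alpha_nonzero[OF t]
    unfolding dhat_def dtau_Afun[OF t] Ehat_eq_Eholo[OF t] Cfun_power[OF t] Bfun_power[OF t] Afun_eq Eholo_def
    by (simp add: field_simps power2_eq_square)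
qed

lemma dhat_Bfun:
  assumes t: "t \<in> U"
  shows "dhat 1 (Bfun r \<alpha>) t = 1 / (2 * of_nat r) * Bfun r \<alpha> t * (Ehat r \<alpha> t - Afun r \<alpha> t ^ 2)"
proof -
  have "complex_of_real (Im t) \<noteq> 0"
    using Im_pos[OF t] by simp
  then show ?thesis
    using r unfolding dhat_def dtau_Bfun[OF t] Ehat_eq_Eholo[OF t] Afun_eq Eholo_def
    by (simp add: field_simps power2_eq_square)
qed

lemma dhat_Cfun:
  assumes t: "t \<in> U"
  shows "dhat 1 (Cfun r \<alpha>) t = 1 / (2 * of_nat r) * Cfun r \<alpha> t * (Ehat r \<alpha> t + Afun r \<alpha> t ^ 2)"
proof -
  have "complex_of_real (Im t) \<noteq> 0"
    using Im_pos[OF t] by simp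
  then show ?thesis
    using r unfolding dhat_def dtau_Cfun[OF t] Ehat_eq_Eholo[OF t] Afun_eq Eholo_def
    by (simp add: field_simps power2_eq_square)
qed

lemma dhat_Ehat:
  assumes t: "t \<in> U"
  shows "dhat 2 (Ehat r \<alpha>) t = 1 / (2 * of_nat r) * (Ehat r \<alpha> t ^ 2 - Afun r \<alpha> t ^ 4)"
proof -
  have "complex_of_real (Im t) \<noteq> 0"
    using Im_pos[OF t] by simp
  then show ?thesis
    using r unfolding dhat_def dtau_Ehat[OF t] Ehat_eq_Eholo[OF t] Afun_eq
    by (simp add: field_simps power2_eq_square)
qed

end

theorem theorem3p3:
  fixes sqrtN :: real and r :: nat and U :: "complex set"
    and \<alpha> :: "complex \<Rightarrow> complex" and t :: complex
  assumes Nr: "(sqrtN, r) \<in> {(1, 6), (sqrt 2, 4), (sqrt 3, 3), (sqrt 4, 2)}"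
    and U: "open U" and hol: "\<alpha> holomorphic_on U"
    and region: "\<forall>s\<in>U. 0 < Im s \<and> cmod (\<alpha> s) < 1 \<and> cmod (1 - \<alpha> s) < 1"
    and tau: "\<forall>s\<in>U. omega1 sqrtN r (\<alpha> s) / omega0 r (\<alpha> s) = s"
    and t: "t \<in> U"
  shows "dhat 1 (Afun r \<alpha>) t = 1 / (2 * of_nat r) * Afun r \<alpha> t *
            (Ehat r \<alpha> t + (Cfun r \<alpha> t ^ r - Bfun r \<alpha> t ^ r) / Afun r \<alpha> t ^ r * Afun r \<alpha> t ^ 2)
       \<and> dhat 1 (Bfun r \<alpha>) t = 1 / (2 * of_nat r) * Bfun r \<alpha> t * (Ehat r \<alpha> t - Afun r \<alpha> t ^ 2)
       \<and> dhat 1 (Cfun r \<alpha>) t = 1 / (2 * of_nat r) * Cfun r \<alpha> t * (Ehat r \<alpha> t + Afun r \<alpha> t ^ 2)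
       \<and> dhat 2 (Ehat r \<alpha>) t = 1 / (2 * of_nat r) * (Ehat r \<alpha> t ^ 2 - Afun r \<alpha> t ^ 4)"
proof -
  have "sqrt 4 = (2 :: real)"
    using real_sqrt_abs[of 2] by simp
  then have "2 \<le> r" "sqrtN = 2 * sin (pi / r)"
    using Nr by (auto simp: sin_30 sin_45 sin_60)
  then interpret period_ratio_chart sqrtN r U \<alpha>
    using U hol region tau by unfold_locales
  show ?thesis
    using dhat_Afun[OF t] dhat_Bfun[OF t] dhat_Cfun[OF t] dhat_Ehat[OF t] by blast
qed

end
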